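(* Let $R$ be a unital ring with involution and let $a,b\in R$ both be core invertible. Then $a\overset{\circledast}{\leq} b$ if and only if $a^{\circledast}b=b^{\circledast}a$, $ba^{\circledast}=ab^{\circledast}$ and $ab^{\circledast}a=a$.
   Context: $R$ is a ring with identity and an involution $x\mapsto x^{*}$. An element $a\in R$ is core invertible if there exists $x\in R$ with $axa=a$, $xR=aR$ and $Rx=Ra^{*}$; such $x$ is unique, called the core inverse of $a$ and denoted $a^{\circledast}$. For $a$ core invertible and $b\in R$, $a\overset{\circledast}{\leq} b$ means $a^{\circledast}a=a^{\circledast}b$ and $aa^{\circledast}=ba^{\circledast}$. *)

theory Defs
  imports Main
begin

class ring_invol = ring_1 +
  fixes invol :: "'a \<Rightarrow> 'a"
  assumes invol_invol: "invol (invol x) = x"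
    and invol_add: "invol (x + y) = invol x + invol y"
    and invol_mult: "invol (x * y) = invol y * invol x"

context ring_invol
begin

definition right_ideal_gen :: "'a \<Rightarrow> 'a set" where
  "right_ideal_gen a = {a * r | r. True}"

definition left_ideal_gen :: "'a \<Rightarrow> 'a set" where
  "left_ideal_gen a = {r * a | r. True}"

definition is_core_inverse :: "'a \<Rightarrow> 'a \<Rightarrow> bool" where
  "is_core_inverse a x \<longleftrightarrow> a * x * a = a \<and>
     right_ideal_gen x = right_ideal_gen a \<and>
     left_ideal_gen x = left_ideal_gen (invol a)"

definition core_invertible :: "'a \<Rightarrow> bool" where
  "core_invertible a \<longleftrightarrow> (\<exists>x. is_core_inverse a x)"

definition core_inv :: "'a \<Rightarrow> 'a" where
  "core_inv a = (THE x. is_core_inverse a x)"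

definition core_le :: "'a \<Rightarrow> 'a \<Rightarrow> bool" where
  "core_le a b \<longleftrightarrow> core_inv a * a = core_inv a * b \<and> a * core_inv a = b * core_inv a"

end

end

theory Submission
  imports Defs
begin

text \<open>
  The ideal conditions defining a core inverse x of a yield the equations
  a x a = a, x a x = x, (a x)* = a x, x a a = a and a x x = x, which already force
  uniqueness. Both directions of the theorem are then equational calculations
  with these identities for a and b; the only step that needs the involution is
  x = x b y (for x, y the core inverses of a, b), obtained by writing the
  hermitian element a x = b x as (b x)* and expanding b = b y b.
\<close>

context ring_invol
begin

lemma right_ideal_gen_self: "a \<in> right_ideal_gen a"
  unfolding right_ideal_gen_def by (auto intro: exI[of _ 1])

lemma left_ideal_gen_self: "a \<in> left_ideal_gen a"
  unfolding left_ideal_gen_def by (auto intro: exI[of _ 1])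

lemma core_inverse_eq_mult_invol:
  assumes "is_core_inverse a x"
  shows "x = x * invol (a * x)"
proof -
  have axa: "a * x * a = a" and "left_ideal_gen x = left_ideal_gen (invol a)"
    using assms unfolding is_core_inverse_def by auto
  then obtain w where w: "x = w * invol a"
    using left_ideal_gen_self[of x] unfolding left_ideal_gen_def by auto
  have "invol a = invol a * invol x * invol a"
    using arg_cong[OF axa, of invol] by (simp add: invol_mult mult.assoc)
  then show ?thesis
    using w by (simp add: invol_mult mult.assoc)
qed

lemma core_inverse_hermitian:
  assumes "is_core_inverse a x"
  shows "invol (a * x) = a * x"
proof -
  have ax: "a * x = a * x * invol (a * x)"
    using core_inverse_eq_mult_invol[OF assms] by (metis mult.assoc)
  then have "invol (a * x) = invol (a * x * invol (a * x))" by simp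
  also have "\<dots> = a * x * invol (a * x)"
    by (simp add: invol_mult invol_invol mult.assoc)
  finally show ?thesis using ax by simp
qed

lemma core_inverse_equations:
  assumes "is_core_inverse a x"
  shows "a * x * a = a" and "x * a * x = x" and "invol (a * x) = a * x"
    and "x * a * a = a" and "a * x * x = x"
proof -
  have axa: "a * x * a = a" and range: "right_ideal_gen x = right_ideal_gen a"
    using assms unfolding is_core_inverse_def by auto
  obtain u where u: "x = a * u"
    using range right_ideal_gen_self[of x] unfolding right_ideal_gen_def by auto
  obtain v where v: "a = x * v"
    using range right_ideal_gen_self[of a] unfolding right_ideal_gen_def by auto
  have herm: "invol (a * x) = a * x"
    using core_inverse_hermitian[OF assms] .
  have xax: "x * a * x = x"
    using core_inverse_eq_mult_invol[OF assms] herm by (simp add: mult.assoc)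
  show "a * x * a = a" "x * a * x = x" "invol (a * x) = a * x" by fact+
  show "x * a * a = a" using v xax by (metis mult.assoc)
  show "a * x * x = x" using u axa by (metis mult.assoc)
qed

lemma core_inverse_unique:
  assumes "is_core_inverse a x" and "is_core_inverse a y"
  shows "x = y"
proof -
  note X = core_inverse_equations[OF assms(1)]
  note Y = core_inverse_equations[OF assms(2)]
  have axy: "a * x = a * y"
  proof -
    have "a * y = invol y * invol (a * x * a)"
      using X Y by (simp add: invol_mult)
    also have "\<dots> = invol (a * y) * invol (a * x)"
      by (simp add: invol_mult mult.assoc)
    also have "\<dots> = a * y * a * x"
      using X(3) Y(3) by (simp add: mult.assoc)
    also have "\<dots> = a * x"
      using Y(1) by simp
    finally show ?thesis by simp
  qed
  have "y * a * x = y * a * a * x * x"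
    using X by (metis mult.assoc)
  also have "\<dots> = x"
    using X Y by (simp add: mult.assoc)
  finally have "y * a * x = x" .
  then show ?thesis
    using axy Y by (metis mult.assoc)
qed

lemma core_inv_is_core_inverse:
  assumes "core_invertible a"
  shows "is_core_inverse a (core_inv a)"
  using assms unfolding core_invertible_def core_inv_def
  by (metis theI core_inverse_unique)

lemma core_le_core_inverse_equations:
  assumes "is_core_inverse a x" and "is_core_inverse b y"
    and le_left: "x * a = x * b" and le_right: "a * x = b * x"
  shows "x * b = y * a" and "b * x = a * y" and "a * y * a = a"
proof -
  note X = core_inverse_equations[OF assms(1)]
  note Y = core_inverse_equations[OF assms(2)]
  have x_bxx: "x = b * x * x"
    using X le_right by (metis mult.assoc)
  have "y * a = y * b * b * x * x * a"
    using X le_right x_bxx by (metis mult.assoc)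
  also have "\<dots> = x * a"
    using Y x_bxx by (metis mult.assoc)
  finally show ybx: "x * b = y * a"
    using le_left by simp
  have "x = x * invol (b * x)"
    using X le_right by (metis mult.assoc)
  also have "\<dots> = x * invol x * invol (b * y * b)"
    using Y by (simp add: invol_mult mult.assoc)
  also have "\<dots> = x * invol (b * x) * invol (b * y)"
    by (simp add: invol_mult mult.assoc)
  also have "\<dots> = x * (a * x) * (b * y)"
    using X(3) Y(3) le_right by simp
  also have "\<dots> = x * b * y"
    using X by (metis mult.assoc)
  finally have x_xby: "x = x * b * y" .
  have "a * y = a * x * b * y"
    using X le_left by (metis mult.assoc)
  also have "\<dots> = a * x"
    using x_xby by (metis mult.assoc)
  finally show bxay: "b * x = a * y"
    using le_right by simp
  show "a * y * a = a"
    using bxay le_right X by simp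
qed

lemma core_inverse_equations_core_le:
  assumes "is_core_inverse a x"
    and "x * b = y * a" and "b * x = a * y" and "a * y * a = a"
  shows "x * a = x * b" and "a * x = b * x"
proof -
  note X = core_inverse_equations[OF assms(1)]
  have "x * a = x * a * y * a"
    using assms(4) by (metis mult.assoc)
  also have "\<dots> = x * b"
    using X assms(2) by (metis mult.assoc)
  finally show "x * a = x * b" .
  have "b * x = a * y * a * x"
    using X assms(3) by (metis mult.assoc)
  also have "\<dots> = a * x"
    using assms(4) by simp
  finally show "a * x = b * x" by simp
qed

end

theorem proposition2p8:
  fixes a b :: "'a :: ring_invol"
  assumes "core_invertible a" and "core_invertible b"
  shows "core_le a b \<longleftrightarrow>
    (core_inv a * b = core_inv b * a \<and> b * core_inv a = a * core_inv b \<and> a * core_inv b * a = a)"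
proof -
  note a_core = core_inv_is_core_inverse[OF assms(1)]
  note b_core = core_inv_is_core_inverse[OF assms(2)]
  show ?thesis
    unfolding core_le_def
  proof (intro iffI conjI; (elim conjE)?)
    assume "core_inv a * a = core_inv a * b" and "a * core_inv a = b * core_inv a"
    note le = core_le_core_inverse_equations[OF a_core b_core this]
    show "core_inv a * b = core_inv b * a" by (fact le(1))
    show "b * core_inv a = a * core_inv b" by (fact le(2))
    show "a * core_inv b * a = a" by (fact le(3))
  next
    assume "core_inv a * b = core_inv b * a" and "b * core_inv a = a * core_inv b"
      and "a * core_inv b * a = a"
    note le = core_inverse_equations_core_le[OF a_core this]
    show "core_inv a * a = core_inv a * b" by (fact le(1))
    show "a * core_inv a = b * core_inv a" by (fact le(2))
  qed
qed

end
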